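(* In classical theory, with the bit as obit, the information content of every probability vector $\mathbf p=(p_1,\dots,p_d)$ equals its Shannon entropy: $I(\mathbf p)=H(\mathbf p)=-\sum_ip_i\log_2p_i$.
   Context: Classical theory as an OPT: a system is $\mathbb R^{d}$, states are substochastic vectors ($x_i\ge0$, $\sum_i x_i\le1$; normalized if the sum is 1), pure states are the basis vectors, effects are vectors with entries in $[0,1]$, transformations are substochastic matrices (channels: stochastic), parallel composition is the tensor product; the operational norm is the $\ell^1$ norm. A dilation of $\mathbf p$ is a joint probability vector on $\mathbb R^d\otimes\mathbb R^{d'}$ whose marginal is $\mathbf p$; a refinement of a state is a collection of substochastic vectors summing to it. Information content: a compression scheme is a pair of stochastic maps $\mathcal E:\mathbb R^{d^N}\to\mathbb R^{2^M}$, $\mathcal D:\mathbb R^{2^M}\to\mathbb R^{d^N}$; $E_{N,M,\varepsilon}(\mathbf p)$ is the set of schemes with $\sup_{d',\{\Psi_i\}}\sum_i\|((\mathcal D\mathcal E)\otimes I_{d'})\Psi_i-\Psi_i\|_1<\varepsilon$, over all ancillary dimensions $d'$ and refinements $\{\Psi_i\}$ of dilations of $\mathbf p^{\otimes N}$; $I(\mathbf p):=\lim_{\varepsilon\to0}\limsup_{N\to\infty}\min\{M:E_{N,M,\varepsilon}(\mathbf p)\ne\emptyset\}/N$. *)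

theory Defs
  imports "HOL-Analysis.Analysis"
begin

text \<open>Classical vectors in R^m are represented as functions nat => real, only the
entries with index < m being relevant. A vector on R^m (x) R^d' is a function of two
indices (i, j) with i < m, j < d'. Matrices are functions (row, column) => real.\<close>

definition prob_vec :: "nat \<Rightarrow> (nat \<Rightarrow> real) \<Rightarrow> bool" where
  "prob_vec d p \<longleftrightarrow> (\<forall>i<d. 0 \<le> p i) \<and> (\<Sum>i<d. p i) = 1"

definition shannon :: "nat \<Rightarrow> (nat \<Rightarrow> real) \<Rightarrow> real" where
  "shannon d p = - (\<Sum>i\<in>{i. i < d \<and> p i \<noteq> 0}. p i * log 2 (p i))"

text \<open>N-fold tensor power of p: index k < d^N encodes the tuple of its base-d digits.\<close>
definition tpow :: "nat \<Rightarrow> nat \<Rightarrow> (nat \<Rightarrow> real) \<Rightarrow> nat \<Rightarrow> real" where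
  "tpow d N p k = (\<Prod>t<N. p (k div d ^ t mod d))"

text \<open>Stochastic map R^m -> R^n as an n x m column-stochastic matrix C (C l k).\<close>
definition stochastic :: "nat \<Rightarrow> nat \<Rightarrow> (nat \<Rightarrow> nat \<Rightarrow> real) \<Rightarrow> bool" where
  "stochastic m n C \<longleftrightarrow> (\<forall>k<m. \<forall>l<n. 0 \<le> C l k) \<and> (\<forall>k<m. (\<Sum>l<n. C l k) = 1)"

definition mat_comp :: "nat \<Rightarrow> (nat \<Rightarrow> nat \<Rightarrow> real) \<Rightarrow> (nat \<Rightarrow> nat \<Rightarrow> real) \<Rightarrow> nat \<Rightarrow> nat \<Rightarrow> real" where
  "mat_comp n D E i k = (\<Sum>l<n. D i l * E l k)"

text \<open>(C (x) I_d') applied to a bipartite vector; m is the input dimension of C.\<close>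
definition apply_local :: "nat \<Rightarrow> (nat \<Rightarrow> nat \<Rightarrow> real) \<Rightarrow> (nat \<Rightarrow> nat \<Rightarrow> real) \<Rightarrow> nat \<Rightarrow> nat \<Rightarrow> real" where
  "apply_local m C P i j = (\<Sum>k<m. C i k * P k j)"

definition l1_norm2 :: "nat \<Rightarrow> nat \<Rightarrow> (nat \<Rightarrow> nat \<Rightarrow> real) \<Rightarrow> real" where
  "l1_norm2 m d' P = (\<Sum>i<m. \<Sum>j<d'. \<bar>P i j\<bar>)"

definition is_dilation :: "nat \<Rightarrow> nat \<Rightarrow> (nat \<Rightarrow> real) \<Rightarrow> (nat \<Rightarrow> nat \<Rightarrow> real) \<Rightarrow> bool" where
  "is_dilation m d' q Psi \<longleftrightarrow> (\<forall>i<m. \<forall>j<d'. 0 \<le> Psi i j) \<and>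
     (\<Sum>i<m. \<Sum>j<d'. Psi i j) = 1 \<and> (\<forall>i<m. (\<Sum>j<d'. Psi i j) = q i)"

definition is_refinement :: "nat \<Rightarrow> nat \<Rightarrow> (nat \<Rightarrow> nat \<Rightarrow> real) \<Rightarrow> (nat \<Rightarrow> nat \<Rightarrow> real) list \<Rightarrow> bool" where
  "is_refinement m d' Psi Ps \<longleftrightarrow>
     (\<forall>P\<in>set Ps. (\<forall>i<m. \<forall>j<d'. 0 \<le> P i j) \<and> (\<Sum>i<m. \<Sum>j<d'. P i j) \<le> 1) \<and>
     (\<forall>i<m. \<forall>j<d'. (\<Sum>P\<leftarrow>Ps. P i j) = Psi i j)"

text \<open>(E, D) belongs to E_{N,M,eps}(p); the supremum being < eps is written as
  the existence of a bound c < eps on all the quantities in the supremum.\<close>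
definition scheme_ok :: "nat \<Rightarrow> (nat \<Rightarrow> real) \<Rightarrow> nat \<Rightarrow> nat \<Rightarrow> real \<Rightarrow>
    (nat \<Rightarrow> nat \<Rightarrow> real) \<Rightarrow> (nat \<Rightarrow> nat \<Rightarrow> real) \<Rightarrow> bool" where
  "scheme_ok d p N M eps E D \<longleftrightarrow>
     stochastic (d ^ N) (2 ^ M) E \<and> stochastic (2 ^ M) (d ^ N) D \<and>
     (\<exists>c<eps. \<forall>d' Psi Ps. is_dilation (d ^ N) d' (tpow d N p) Psi \<and>
        is_refinement (d ^ N) d' Psi Ps \<longrightarrow>
        (\<Sum>P\<leftarrow>Ps. l1_norm2 (d ^ N) d'
            (\<lambda>i j. apply_local (d ^ N) (mat_comp (2 ^ M) D E) P i j - P i j)) \<le> c)"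

definition min_bits :: "nat \<Rightarrow> (nat \<Rightarrow> real) \<Rightarrow> nat \<Rightarrow> real \<Rightarrow> nat" where
  "min_bits d p N eps = (LEAST M. \<exists>E D. scheme_ok d p N M eps E D)"

text \<open>I(p) = lim_{eps->0+} limsup_N min_bits/N; we state convergence directly.\<close>
definition info_rate :: "nat \<Rightarrow> (nat \<Rightarrow> real) \<Rightarrow> real \<Rightarrow> ereal" where
  "info_rate d p eps = limsup (\<lambda>N. ereal (real (min_bits d p N eps) / real N))"

end

theory Submission
  imports Defs
begin

text \<open>For \<open>q = p\<^sup>\<otimes>\<^sup>N\<close> the moments \<open>\<Sum>\<^sub>k q\<^sub>k^(1+t)\<close> factor as \<open>(\<Sum>\<^sub>i p\<^sub>i^(1+t))^N\<close>, so both
  bounds reduce to \<open>F(t) = (\<Sum>\<^sub>i p\<^sub>i^(1+t)) 2^(tK)\<close>, which satisfies \<open>F(0) = 1\<close> and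
  \<open>F'(0) = (K - H) ln 2\<close>: hence \<open>F(s) < 1\<close> for small \<open>s > 0\<close> if \<open>K < H\<close>, and \<open>F(-s) < 1\<close> if \<open>K > H\<close>.

  Achievability, \<open>K = H + \<delta>\<close>: at most \<open>2^(NK)\<close> strings have probability \<open>\<ge> \<tau> = 2^(-NK)\<close>. Coding
  exactly these, the error on every refined dilation is at most twice the probability of the
  other strings, which is at most \<open>\<tau>^s \<Sum>\<^sub>k q\<^sub>k^(1-s) = F(-s)^N\<close>.

  Converse, \<open>K = H - \<delta>/2\<close>: refining the trivial dilation into point masses shows that the success
  probability \<open>\<Sum>\<^sub>k q\<^sub>k (DE)\<^sub>k\<^sub>k\<close> exceeds \<open>1 - \<epsilon>\<close>. As the trace of \<open>DE\<close> is at most \<open>2^M\<close>, the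
  success probability is also at most \<open>\<tau>^(-s) \<Sum>\<^sub>k q\<^sub>k^(1+s) + \<tau> 2^M = F(s)^N + 2^(M - NK)\<close>, which is
  exponentially small when \<open>M \<le> N (H - \<delta>)\<close>. So \<open>min_bits/N\<close> tends to \<open>H\<close> for every \<open>\<epsilon> \<in> (0,1)\<close>,
  and the limit \<open>\<epsilon> \<rightarrow> 0\<close> is trivial.\<close>

lemma sum_lessThan_mult_div_mod:
  fixes F G :: "nat \<Rightarrow> 'a::comm_semiring_1"
  assumes "0 < d"
  shows "(\<Sum>k<d * m. F (k mod d) * G (k div d)) = (\<Sum>a<d. F a) * (\<Sum>b<m. G b)"
proof -
  have "(\<Sum>k<d * m. F (k mod d) * G (k div d)) = (\<Sum>(a, b)\<in>{..<d} \<times> {..<m}. F a * G b)"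
  proof (rule sum.reindex_bij_witness[where i = "\<lambda>(a, b). a + d * b" and j = "\<lambda>k. (k mod d, k div d)"])
    fix ab assume "ab \<in> {..<d} \<times> {..<m}"
    then obtain a b where ab: "ab = (a, b)" "a < d" "b < m" by blast
    have "a + d * b < d + d * b" using ab by simp
    also have "\<dots> \<le> d * m" using ab by (metis mult_Suc_right mult_le_mono2 Suc_leI add.commute)
    finally show "(case ab of (a, b) \<Rightarrow> a + d * b) \<in> {..<d * m}" using ab by simp
  qed (use assms in \<open>auto simp: less_mult_imp_div_less mult.commute\<close>)
  also have "\<dots> = (\<Sum>a<d. F a) * (\<Sum>b<m. G b)"
    by (simp add: sum_product sum.cartesian_product)
  finally show ?thesis .
qed

lemma sum_prod_digits:
  fixes f :: "nat \<Rightarrow> 'a::comm_semiring_1"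
  assumes "0 < d"
  shows "(\<Sum>k<d ^ N. \<Prod>t<N. f (k div d ^ t mod d)) = (\<Sum>i<d. f i) ^ N"
proof (induction N)
  case (Suc N)
  have "(\<Sum>k<d ^ Suc N. \<Prod>t<Suc N. f (k div d ^ t mod d))
      = (\<Sum>k<d * d ^ N. f (k mod d) * (\<Prod>t<N. f (k div d div d ^ t mod d)))"
    by (simp only: power_Suc prod.lessThan_Suc_shift) (simp add: div_mult2_eq)
  also have "\<dots> = (\<Sum>i<d. f i) * (\<Sum>k<d ^ N. \<Prod>t<N. f (k div d ^ t mod d))"
    by (rule sum_lessThan_mult_div_mod[OF assms])
  finally show ?case using Suc by simp
qed simp

lemma tpow_nonneg: "0 < d \<Longrightarrow> \<forall>i<d. 0 \<le> p i \<Longrightarrow> 0 \<le> tpow d N p k"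
  unfolding tpow_def by (auto intro!: prod_nonneg)

lemma sum_tpow: "0 < d \<Longrightarrow> (\<Sum>k<d ^ N. tpow d N p k) = (\<Sum>i<d. p i) ^ N"
  unfolding tpow_def by (rule sum_prod_digits)

lemma sum_tpow_powr:
  assumes "0 < d" "\<forall>i<d. 0 \<le> p i"
  shows "(\<Sum>k<d ^ N. tpow d N p k powr a) = (\<Sum>i<d. p i powr a) ^ N"
proof -
  have "(\<Sum>k<d ^ N. tpow d N p k powr a) = (\<Sum>k<d ^ N. \<Prod>t<N. p (k div d ^ t mod d) powr a)"
    unfolding tpow_def using assms by (auto intro!: sum.cong prod_powr_distrib)
  then show ?thesis using sum_prod_digits[OF assms(1), of "\<lambda>i. p i powr a"] by simp
qed

lemma prob_vec_pos_dim: "prob_vec d p \<Longrightarrow> 0 < d"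
  unfolding prob_vec_def by (cases d) auto

lemma prob_vec_tpow: "prob_vec d p \<Longrightarrow> prob_vec (d ^ N) (tpow d N p)"
  using prob_vec_pos_dim[of d p] sum_tpow[of d N p] tpow_nonneg[of d p N]
  unfolding prob_vec_def by auto

lemma prob_vec_le_1:
  assumes "prob_vec n q" "k < n"
  shows "q k \<le> 1"
proof -
  have "q k \<le> (\<Sum>i<n. q i)" using assms unfolding prob_vec_def by (intro member_le_sum) auto
  then show ?thesis using assms unfolding prob_vec_def by simp
qed

lemma stochastic_le_1:
  assumes "stochastic m n C" "k < m" "l < n"
  shows "C l k \<le> 1"
proof -
  have "C l k \<le> (\<Sum>l'<n. C l' k)" using assms unfolding stochastic_def by (intro member_le_sum) auto
  then show ?thesis using assms unfolding stochastic_def by simp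
qed

lemma stochastic_mat_comp:
  assumes E: "stochastic n m E" and D: "stochastic m n D"
  shows "stochastic n n (mat_comp m D E)"
  unfolding stochastic_def
proof (intro conjI allI impI)
  fix k l assume "k < n" "l < n"
  then show "0 \<le> mat_comp m D E l k"
    unfolding mat_comp_def using D E unfolding stochastic_def by (auto intro!: sum_nonneg)
next
  fix k assume k: "k < n"
  have "(\<Sum>l<n. mat_comp m D E l k) = (\<Sum>j<m. (\<Sum>l<n. D l j) * E j k)"
    unfolding mat_comp_def by (subst sum.swap) (simp add: sum_distrib_right)
  also have "\<dots> = 1" using D E k unfolding stochastic_def by simp
  finally show "(\<Sum>l<n. mat_comp m D E l k) = 1" .
qed

lemma sum_diag_mat_comp_le:
  assumes E: "stochastic n m E" and D: "stochastic m n D"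
  shows "(\<Sum>k<n. mat_comp m D E k k) \<le> m"
proof -
  have "(\<Sum>k<n. mat_comp m D E k k) = (\<Sum>l<m. \<Sum>k<n. D k l * E l k)"
    unfolding mat_comp_def by (rule sum.swap)
  also have "\<dots> \<le> (\<Sum>l<m. \<Sum>k<n. D k l)"
    using D E stochastic_le_1[OF E] unfolding stochastic_def
    by (intro sum_mono) (auto intro!: mult_right_le_one_le)
  also have "\<dots> = m" using D unfolding stochastic_def by simp
  finally show ?thesis .
qed

lemma sum_abs_column_minus_unit:
  assumes C: "stochastic n n C" and k: "k < n"
  shows "(\<Sum>i<n. \<bar>C i k - of_bool (i = k)\<bar>) = 2 * (1 - C k k)"
proof -
  have "(\<Sum>i<n. \<bar>C i k - of_bool (i = k)\<bar>) = (\<Sum>i<n. C i k + of_bool (i = k) * (1 - 2 * C k k))"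
    using C k stochastic_le_1[OF C k k] unfolding stochastic_def by (intro sum.cong) auto
  also have "\<dots> = 2 * (1 - C k k)"
    using C k unfolding stochastic_def by (simp add: sum.distrib flip: sum_distrib_right)
  finally show ?thesis .
qed

definition refinement_error ::
    "nat \<Rightarrow> nat \<Rightarrow> (nat \<Rightarrow> nat \<Rightarrow> real) \<Rightarrow> (nat \<Rightarrow> nat \<Rightarrow> real) list \<Rightarrow> real" where
  "refinement_error n d' C Ps = (\<Sum>P\<leftarrow>Ps. l1_norm2 n d' (\<lambda>i j. apply_local n C P i j - P i j))"

lemma scheme_ok_iff:
  "scheme_ok d p N M eps E D \<longleftrightarrow>
     stochastic (d ^ N) (2 ^ M) E \<and> stochastic (2 ^ M) (d ^ N) D \<and>
     (\<exists>c<eps. \<forall>d' Psi Ps. is_dilation (d ^ N) d' (tpow d N p) Psi \<and> is_refinement (d ^ N) d' Psi Ps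
        \<longrightarrow> refinement_error (d ^ N) d' (mat_comp (2 ^ M) D E) Ps \<le> c)"
  unfolding scheme_ok_def refinement_error_def ..

lemma l1_norm2_apply_local_minus_le:
  assumes C: "stochastic n n C" and P: "\<forall>k<n. \<forall>j<d'. 0 \<le> P k j"
  shows "l1_norm2 n d' (\<lambda>i j. apply_local n C P i j - P i j)
           \<le> (\<Sum>k<n. (\<Sum>j<d'. P k j) * (2 * (1 - C k k)))"
proof -
  have "l1_norm2 n d' (\<lambda>i j. apply_local n C P i j - P i j)
      = (\<Sum>i<n. \<Sum>j<d'. \<bar>\<Sum>k<n. (C i k - of_bool (i = k)) * P k j\<bar>)"
    unfolding l1_norm2_def apply_local_def
    by (intro sum.cong refl) (simp add: left_diff_distrib sum_subtractf)
  also have "\<dots> \<le> (\<Sum>i<n. \<Sum>j<d'. \<Sum>k<n. \<bar>C i k - of_bool (i = k)\<bar> * P k j)"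
    using P by (intro sum_mono order.trans[OF sum_abs]) (auto simp: abs_mult)
  also have "\<dots> = (\<Sum>i<n. \<Sum>k<n. \<Sum>j<d'. \<bar>C i k - of_bool (i = k)\<bar> * P k j)"
    by (intro sum.cong refl sum.swap)
  also have "\<dots> = (\<Sum>k<n. \<Sum>i<n. \<Sum>j<d'. \<bar>C i k - of_bool (i = k)\<bar> * P k j)"
    by (rule sum.swap)
  also have "\<dots> = (\<Sum>k<n. \<Sum>j<d'. \<Sum>i<n. \<bar>C i k - of_bool (i = k)\<bar> * P k j)"
    by (intro sum.cong refl sum.swap)
  also have "\<dots> = (\<Sum>k<n. (\<Sum>j<d'. P k j) * (\<Sum>i<n. \<bar>C i k - of_bool (i = k)\<bar>))"
    unfolding sum_product by (simp add: mult.commute)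
  also have "\<dots> = (\<Sum>k<n. (\<Sum>j<d'. P k j) * (2 * (1 - C k k)))"
    using sum_abs_column_minus_unit[OF C] by simp
  finally show ?thesis .
qed

lemma refinement_error_le:
  assumes C: "stochastic n n C" and dil: "is_dilation n d' q Psi" and ref: "is_refinement n d' Psi Ps"
  shows "refinement_error n d' C Ps \<le> 2 * (\<Sum>k<n. q k * (1 - C k k))"
proof -
  have "refinement_error n d' C Ps \<le> (\<Sum>P\<leftarrow>Ps. \<Sum>k<n. (\<Sum>j<d'. P k j) * (2 * (1 - C k k)))"
    unfolding refinement_error_def using ref
    by (intro sum_list_mono l1_norm2_apply_local_minus_le[OF C]) (auto simp: is_refinement_def)
  also have "\<dots> = (\<Sum>k<n. (\<Sum>j<d'. \<Sum>P\<leftarrow>Ps. P k j) * (2 * (1 - C k k)))"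
    by (induction Ps) (simp_all add: sum.distrib distrib_right)
  also have "\<dots> = (\<Sum>k<n. q k * (2 * (1 - C k k)))"
    using ref dil unfolding is_refinement_def is_dilation_def by (intro sum.cong) auto
  finally show ?thesis by (simp add: sum_distrib_left mult.left_commute)
qed

lemma exists_refinement_error_ge:
  assumes q: "prob_vec n q"
  shows "\<exists>Psi Ps. is_dilation n 1 q Psi \<and> is_refinement n 1 Psi Ps \<and>
           (\<Sum>k<n. q k * (1 - C k k)) \<le> refinement_error n 1 C Ps"
proof (intro exI conjI)
  define Pk where "Pk k = (\<lambda>i (j::nat). if i = k then q k else 0)" for k
  show "is_dilation n 1 q (\<lambda>i j. q i)"
    using q unfolding is_dilation_def prob_vec_def by simp
  have sum_Pk: "(\<Sum>P\<leftarrow>map Pk [0..<n]. f P) = (\<Sum>k<n. f (Pk k))" for f :: "_ \<Rightarrow> 'a::comm_monoid_add"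
    by (simp add: interv_sum_list_conv_sum_set_nat atLeast0LessThan)
  show "is_refinement n 1 (\<lambda>i j. q i) (map Pk [0..<n])"
    using q prob_vec_le_1[OF q] unfolding is_refinement_def prob_vec_def Pk_def
    by (auto simp: interv_sum_list_conv_sum_set_nat atLeast0LessThan)
  have "q k * (1 - C k k) \<le> l1_norm2 n 1 (\<lambda>i j. apply_local n C (Pk k) i j - Pk k i j)"
    if k: "k < n" for k
  proof -
    have "q k * (1 - C k k) \<le> \<bar>C k k * q k - q k\<bar>" by (simp add: algebra_simps)
    also have "\<dots> \<le> (\<Sum>i<n. \<bar>C i k * q k - (if i = k then q k else 0)\<bar>)"
      using k member_le_sum[of k "{..<n}" "\<lambda>i. \<bar>C i k * q k - (if i = k then q k else 0)\<bar>"] by simp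
    also have "\<dots> = l1_norm2 n 1 (\<lambda>i j. apply_local n C (Pk k) i j - Pk k i j)"
      unfolding l1_norm2_def apply_local_def Pk_def using k
      by (simp add: if_distrib cong: if_cong)
    finally show ?thesis .
  qed
  then show "(\<Sum>k<n. q k * (1 - C k k)) \<le> refinement_error n 1 C (map Pk [0..<n])"
    unfolding refinement_error_def sum_Pk by (intro sum_mono) simp
qed

lemma scheme_ok_imp_success:
  assumes p: "prob_vec d p" and ok: "scheme_ok d p N M eps E D"
  shows "1 - eps < (\<Sum>k<d ^ N. tpow d N p k * mat_comp (2 ^ M) D E k k)"
proof -
  define q where "q = tpow d N p"
  have q: "prob_vec (d ^ N) q" unfolding q_def by (rule prob_vec_tpow[OF p])
  obtain c where "c < eps" and "\<And>d' Psi Ps. is_dilation (d ^ N) d' q Psi \<Longrightarrow>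
      is_refinement (d ^ N) d' Psi Ps \<Longrightarrow> refinement_error (d ^ N) d' (mat_comp (2 ^ M) D E) Ps \<le> c"
    using ok unfolding scheme_ok_iff q_def by blast
  moreover obtain Psi Ps where "is_dilation (d ^ N) 1 q Psi" "is_refinement (d ^ N) 1 Psi Ps"
    and "(\<Sum>k<d ^ N. q k * (1 - mat_comp (2 ^ M) D E k k)) \<le> refinement_error (d ^ N) 1 (mat_comp (2 ^ M) D E) Ps"
    using exists_refinement_error_ge[OF q] by blast
  moreover have "(\<Sum>k<d ^ N. q k * (1 - mat_comp (2 ^ M) D E k k))
      = 1 - (\<Sum>k<d ^ N. q k * mat_comp (2 ^ M) D E k k)"
    using q unfolding prob_vec_def by (simp add: algebra_simps sum_subtractf)
  ultimately show ?thesis unfolding q_def by (smt (verit))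
qed

lemma scheme_okI:
  assumes E: "stochastic (d ^ N) (2 ^ M) E" and D: "stochastic (2 ^ M) (d ^ N) D"
    and small: "2 * (\<Sum>k<d ^ N. tpow d N p k * (1 - mat_comp (2 ^ M) D E k k)) < eps"
  shows "scheme_ok d p N M eps E D"
  unfolding scheme_ok_iff
  using E D small refinement_error_le[OF stochastic_mat_comp[OF E D]] by blast

lemma exists_code_fixing:
  assumes S: "S \<subseteq> {..<n}" and card: "card S \<le> m" and "0 < n" "0 < m"
  shows "\<exists>E D. stochastic n m E \<and> stochastic m n D \<and> (\<forall>k\<in>S. mat_comp m D E k k = 1)"
proof -
  have "finite S" using S finite_subset by blast
  then obtain g where g: "g ` S \<subseteq> {..<m}" and inj: "inj_on g S"
    using card_le_inj[of S "{..<m}"] card by auto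
  define E :: "nat \<Rightarrow> nat \<Rightarrow> real" where "E l k = of_bool (l = (if k \<in> S then g k else 0))" for l k
  define D :: "nat \<Rightarrow> nat \<Rightarrow> real" where "D i l = of_bool (i = (if l \<in> g ` S then the_inv_into S g l else 0))" for i l
  have "stochastic n m E"
    using g \<open>0 < m\<close> unfolding stochastic_def E_def by auto
  moreover have "stochastic m n D"
    using S inj \<open>0 < n\<close> unfolding stochastic_def D_def by (auto simp: the_inv_into_f_f subset_eq)
  moreover have "mat_comp m D E k k = 1" if k: "k \<in> S" for k
  proof -
    have "mat_comp m D E k k = D k (g k)"
      unfolding mat_comp_def E_def using k g by auto
    also have "\<dots> = 1" unfolding D_def using k inj by (simp add: the_inv_into_f_f)
    finally show ?thesis .
  qed
  ultimately show ?thesis by blast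
qed

lemma card_heavy_le:
  assumes q: "prob_vec n q" and \<tau>: "0 < \<tau>"
  shows "real (card {k. k < n \<and> \<tau> \<le> q k}) \<le> 1 / \<tau>"
proof -
  define S where "S = {k. k < n \<and> \<tau> \<le> q k}"
  have "real (card S) * \<tau> = (\<Sum>k\<in>S. \<tau>)" by simp
  also have "\<dots> \<le> (\<Sum>k\<in>S. q k)" unfolding S_def by (intro sum_mono) auto
  also have "\<dots> \<le> (\<Sum>k<n. q k)" using q unfolding S_def prob_vec_def by (intro sum_mono2) auto
  finally show ?thesis using q \<tau> unfolding S_def prob_vec_def by (simp add: field_simps)
qed

lemma sum_above_threshold_le:
  fixes q :: "nat \<Rightarrow> real"
  assumes \<tau>: "0 < \<tau>" and s: "0 < s"
  shows "(\<Sum>k<n. if \<tau> < q k then q k else 0) \<le> \<tau> powr (-s) * (\<Sum>k<n. q k powr (1 + s))"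
  unfolding sum_distrib_left
proof (intro sum_mono)
  fix k
  show "(if \<tau> < q k then q k else 0) \<le> \<tau> powr (-s) * q k powr (1 + s)"
  proof (cases "\<tau> < q k")
    case True
    then have "0 < q k" using \<tau> by linarith
    have "q k = q k * (\<tau> powr (-s) * \<tau> powr s)" using \<tau> by (simp flip: powr_add)
    also have "\<dots> \<le> q k * (\<tau> powr (-s) * q k powr s)"
      using True \<tau> s \<open>0 < q k\<close> by (intro mult_left_mono powr_mono2) auto
    also have "\<dots> = \<tau> powr (-s) * q k powr (1 + s)" using \<open>0 < q k\<close> by (simp add: powr_add)
    finally show ?thesis using True by simp
  qed simp
qed

lemma sum_below_threshold_le:
  fixes q :: "nat \<Rightarrow> real"
  assumes \<tau>: "0 < \<tau>" and s: "0 < s" and q: "\<forall>k<n. 0 \<le> q k"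
  shows "(\<Sum>k<n. if q k < \<tau> then q k else 0) \<le> \<tau> powr s * (\<Sum>k<n. q k powr (1 - s))"
  unfolding sum_distrib_left
proof (intro sum_mono)
  fix k assume k: "k \<in> {..<n}"
  show "(if q k < \<tau> then q k else 0) \<le> \<tau> powr s * q k powr (1 - s)"
  proof (cases "q k < \<tau> \<and> 0 < q k")
    case True
    have "q k = q k powr s * q k powr (1 - s)" using True by (simp flip: powr_add)
    also have "\<dots> \<le> \<tau> powr s * q k powr (1 - s)"
      using True \<tau> s by (intro mult_right_mono powr_mono2) auto
    finally show ?thesis using True by simp
  qed (use q k in auto)
qed

lemma sum_weighted_le_threshold:
  fixes q c :: "nat \<Rightarrow> real"
  assumes q: "\<forall>k<n. 0 \<le> q k" and c: "\<forall>k<n. 0 \<le> c k \<and> c k \<le> 1"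
    and trace: "(\<Sum>k<n. c k) \<le> m" and \<tau>: "0 < \<tau>"
  shows "(\<Sum>k<n. q k * c k) \<le> (\<Sum>k<n. if \<tau> < q k then q k else 0) + \<tau> * m"
proof -
  have "q k * c k \<le> (if \<tau> < q k then q k else 0) + \<tau> * c k" if k: "k < n" for k
  proof (cases "\<tau> < q k")
    case True
    then show ?thesis using q c \<tau> k by (simp add: add_increasing2 mult_right_le_one_le)
  qed (use c k in \<open>simp add: mult_right_mono\<close>)
  then have "(\<Sum>k<n. q k * c k) \<le> (\<Sum>k<n. (if \<tau> < q k then q k else 0) + \<tau> * c k)"
    by (intro sum_mono) auto
  also have "\<dots> \<le> (\<Sum>k<n. if \<tau> < q k then q k else 0) + \<tau> * m"
    using trace \<tau> by (simp add: sum.distrib flip: sum_distrib_left)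
  finally show ?thesis .
qed

text \<open>\<open>tilt d p K t = 2 powr (t * (K - H\<^sub>\<alpha>(p)))\<close> with \<open>H\<^sub>\<alpha>\<close> the Renyi entropy of order \<open>\<alpha> = 1 + t\<close>.\<close>
definition tilt :: "nat \<Rightarrow> (nat \<Rightarrow> real) \<Rightarrow> real \<Rightarrow> real \<Rightarrow> real" where
  "tilt d p K t = (\<Sum>i<d. p i powr (1 + t)) * 2 powr (t * K)"

lemma tilt_0: "prob_vec d p \<Longrightarrow> tilt d p K 0 = 1"
  unfolding prob_vec_def tilt_def by simp

lemma tilt_nonneg: "0 \<le> tilt d p K t"
  unfolding tilt_def by (intro mult_nonneg_nonneg sum_nonneg) auto

lemma has_real_derivative_tilt:
  assumes p: "prob_vec d p"
  shows "(tilt d p K has_real_derivative (K - shannon d p) * ln 2) (at 0)"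
proof -
  define S where "S = {i. i < d \<and> p i \<noteq> 0}"
  have pos: "0 < p i" if "i \<in> S" for i
    using p that unfolding S_def prob_vec_def by force
  have sum_S: "(\<Sum>i<d. p i powr a) = (\<Sum>i\<in>S. p i powr a)" for a
    unfolding S_def by (rule sum.mono_neutral_right) auto
  have "((\<lambda>t. \<Sum>i\<in>S. p i powr (1 + t)) has_real_derivative (\<Sum>i\<in>S. p i powr (1 + 0) * ln (p i))) (at 0)"
    by (rule DERIV_sum, rule derivative_eq_intros, auto intro!: derivative_eq_intros simp: pos)
  moreover have "((\<lambda>t. 2 powr (t * K)) has_real_derivative 2 powr (0 * K) * (K * ln 2)) (at 0)"
    by (auto intro!: derivative_eq_intros)
  ultimately have "(tilt d p K has_real_derivative
      (\<Sum>i\<in>S. p i powr (1 + 0)) * (2 powr (0 * K) * (K * ln 2))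
      + (\<Sum>i\<in>S. p i powr (1 + 0) * ln (p i)) * 2 powr (0 * K)) (at 0)"
    unfolding tilt_def sum_S by (rule DERIV_mult')
  moreover have "(\<Sum>i\<in>S. p i powr (1 + 0)) = 1"
    using p sum_S[of 1] unfolding prob_vec_def by simp
  moreover have "(\<Sum>i\<in>S. p i powr (1 + 0) * ln (p i)) = - shannon d p * ln 2"
  proof -
    have "(\<Sum>i\<in>S. p i powr (1 + 0) * ln (p i)) = (\<Sum>i\<in>S. p i * log 2 (p i) * ln 2)"
      by (intro sum.cong refl) (simp add: log_def pos abs_of_pos)
    also have "\<dots> = - shannon d p * ln 2"
      unfolding shannon_def S_def by (simp add: sum_distrib_right)
    finally show ?thesis .
  qed
  ultimately show ?thesis by (simp add: algebra_simps)
qed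

lemma tilt_less_1_right:
  assumes p: "prob_vec d p" and K: "K < shannon d p"
  shows "\<exists>s>0. tilt d p K s < 1"
proof -
  have "(K - shannon d p) * ln 2 < 0" using K by (simp add: mult_neg_pos)
  from DERIV_neg_dec_right[OF has_real_derivative_tilt[OF p] this]
  obtain e where "e > 0" and "\<And>h. 0 < h \<Longrightarrow> h < e \<Longrightarrow> tilt d p K (0 + h) < tilt d p K 0" by blast
  then show ?thesis using tilt_0[OF p] by (intro exI[of _ "e / 2"]) auto
qed

lemma tilt_less_1_left:
  assumes p: "prob_vec d p" and K: "shannon d p < K"
  shows "\<exists>s>0. tilt d p K (- s) < 1"
proof -
  have "0 < (K - shannon d p) * ln 2" using K by simp
  from DERIV_pos_inc_left[OF has_real_derivative_tilt[OF p] this]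
  obtain e where "e > 0" and "\<And>h. 0 < h \<Longrightarrow> h < e \<Longrightarrow> tilt d p K (0 - h) < tilt d p K 0" by blast
  then show ?thesis using tilt_0[OF p] by (intro exI[of _ "e / 2"]) auto
qed

lemma tilt_power:
  assumes "0 < d" "\<forall>i<d. 0 \<le> p i"
  shows "tilt d p K t ^ N = (2 powr (- (real N * K))) powr (- t) * (\<Sum>k<d ^ N. tpow d N p k powr (1 + t))"
  unfolding tilt_def sum_tpow_powr[OF assms]
  by (simp add: power_mult_distrib powr_power powr_powr algebra_simps)

lemma eventually_scheme_ok_at_bits_above_entropy:
  assumes p: "prob_vec d p" and eps: "0 < eps" and \<delta>: "0 < \<delta>"
  shows "eventually (\<lambda>N. \<exists>E D. scheme_ok d p N (nat \<lceil>real N * (shannon d p + \<delta>)\<rceil>) eps E D) sequentially"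
proof -
  define K where "K = shannon d p + \<delta>"
  have d: "0 < d" and p_nonneg: "\<forall>i<d. 0 \<le> p i" using p prob_vec_pos_dim unfolding prob_vec_def by auto
  have "shannon d p < K" unfolding K_def using \<delta> by simp
  then obtain s where s: "0 < s" and r: "tilt d p K (- s) < 1"
    using tilt_less_1_left[OF p] by blast
  have "(\<lambda>N. tilt d p K (- s) ^ N) \<longlonglongrightarrow> 0"
    using tilt_nonneg r by (intro LIMSEQ_power_zero) auto
  then have "eventually (\<lambda>N. tilt d p K (- s) ^ N < eps / 2) sequentially"
    using eps by (intro order_tendstoD) auto
  then show ?thesis unfolding K_def[symmetric]
  proof (rule eventually_mono)
    fix N assume small: "tilt d p K (- s) ^ N < eps / 2"
    define n where "n = d ^ N"
    define q where "q = tpow d N p"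
    define M where "M = nat \<lceil>real N * K\<rceil>"
    define \<tau> where "\<tau> = (2::real) powr (- (real N * K))"
    define S where "S = {k. k < n \<and> \<tau> \<le> q k}"
    have q: "prob_vec n q" unfolding q_def n_def by (rule prob_vec_tpow[OF p])
    have \<tau>: "0 < \<tau>" unfolding \<tau>_def by simp
    have "real (card S) \<le> 1 / \<tau>" unfolding S_def by (rule card_heavy_le[OF q \<tau>])
    also have "\<dots> = 2 powr (real N * K)" unfolding \<tau>_def by (simp add: powr_minus divide_inverse)
    also have "\<dots> \<le> 2 powr (real M)" unfolding M_def by (intro powr_mono) linarith+
    also have "\<dots> = real (2 ^ M)" by (simp add: powr_realpow)
    finally have "card S \<le> 2 ^ M" by (rule of_nat_le_iff[THEN iffD1])
    then obtain E D where E: "stochastic n (2 ^ M) E" and D: "stochastic (2 ^ M) n D"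
      and fix_S: "\<forall>k\<in>S. mat_comp (2 ^ M) D E k k = 1"
      using exists_code_fixing[of S n "2 ^ M"] d unfolding S_def n_def by auto
    have "(\<Sum>k<n. q k * (1 - mat_comp (2 ^ M) D E k k)) \<le> (\<Sum>k<n. if q k < \<tau> then q k else 0)"
    proof (intro sum_mono)
      fix k assume k: "k \<in> {..<n}"
      show "q k * (1 - mat_comp (2 ^ M) D E k k) \<le> (if q k < \<tau> then q k else 0)"
      proof (cases "q k < \<tau>")
        case True
        have "0 \<le> q k * mat_comp (2 ^ M) D E k k"
          using q stochastic_mat_comp[OF E D] k unfolding prob_vec_def stochastic_def by simp
        then show ?thesis using True by (simp add: right_diff_distrib)
      next
        case False
        then show ?thesis using fix_S k unfolding S_def by simp
      qed
    qed
    also have "\<dots> \<le> \<tau> powr s * (\<Sum>k<n. q k powr (1 - s))"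
      using q \<tau> s unfolding prob_vec_def by (intro sum_below_threshold_le) auto
    also have "\<dots> = tilt d p K (- s) ^ N"
      unfolding tilt_power[OF d p_nonneg] \<tau>_def q_def n_def by simp
    finally have "2 * (\<Sum>k<n. q k * (1 - mat_comp (2 ^ M) D E k k)) < eps"
      using small by linarith
    then show "\<exists>E D. scheme_ok d p N M eps E D"
      using scheme_okI E D unfolding n_def q_def by blast
  qed
qed

lemma eventually_scheme_ok_imp_bits_above_entropy:
  assumes p: "prob_vec d p" and eps: "eps < 1" and \<delta>: "0 < \<delta>"
  shows "eventually (\<lambda>N. \<forall>M E D. scheme_ok d p N M eps E D \<longrightarrow> real N * (shannon d p - \<delta>) < real M)
           sequentially"
proof -
  define K where "K = shannon d p - \<delta> / 2"
  have d: "0 < d" and p_nonneg: "\<forall>i<d. 0 \<le> p i" using p prob_vec_pos_dim unfolding prob_vec_def by auto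
  have "K < shannon d p" unfolding K_def using \<delta> by simp
  then obtain s where s: "0 < s" and r: "tilt d p K s < 1"
    using tilt_less_1_right[OF p] by blast
  define r' where "r' = (2::real) powr (- \<delta> / 2)"
  have "r' < 1" unfolding r'_def using \<delta> by (simp add: powr_minus inverse_less_1_iff)
  then have "(\<lambda>N. tilt d p K s ^ N + r' ^ N) \<longlonglongrightarrow> 0 + 0"
    using tilt_nonneg r unfolding r'_def by (intro tendsto_add LIMSEQ_power_zero) auto
  then have "eventually (\<lambda>N. tilt d p K s ^ N + r' ^ N < 1 - eps) sequentially"
    using eps by (intro order_tendstoD) auto
  then show ?thesis
  proof (rule eventually_mono, intro allI impI)
    fix N M E D
    assume small: "tilt d p K s ^ N + r' ^ N < 1 - eps" and ok: "scheme_ok d p N M eps E D"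
    define n where "n = d ^ N"
    define q where "q = tpow d N p"
    define \<tau> where "\<tau> = (2::real) powr (- (real N * K))"
    have q: "prob_vec n q" unfolding q_def n_def by (rule prob_vec_tpow[OF p])
    have E: "stochastic n (2 ^ M) E" and D: "stochastic (2 ^ M) n D"
      using ok unfolding scheme_ok_def n_def by auto
    have "1 - eps < (\<Sum>k<n. q k * mat_comp (2 ^ M) D E k k)"
      using scheme_ok_imp_success[OF p ok] unfolding n_def q_def .
    also have "\<dots> \<le> (\<Sum>k<n. if \<tau> < q k then q k else 0) + \<tau> * 2 ^ M"
      using q stochastic_mat_comp[OF E D] sum_diag_mat_comp_le[OF E D]
        stochastic_le_1[OF stochastic_mat_comp[OF E D]]
      unfolding prob_vec_def stochastic_def \<tau>_def by (intro sum_weighted_le_threshold) auto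
    also have "(\<Sum>k<n. if \<tau> < q k then q k else 0) \<le> tilt d p K s ^ N"
      using sum_above_threshold_le[where n = n and q = q and s = s] s
      unfolding tilt_power[OF d p_nonneg] \<tau>_def q_def n_def by simp
    finally have "r' ^ N < \<tau> * 2 ^ M" using small by linarith
    moreover have "\<tau> * 2 ^ M = 2 powr (- (real N * K) + real M)"
      unfolding \<tau>_def powr_add by (simp add: powr_realpow)
    moreover have "r' ^ N = 2 powr (real N * (- \<delta> / 2))"
      unfolding r'_def by (simp add: powr_power)
    ultimately have "real N * (- \<delta> / 2) < - (real N * K) + real M" by simp
    then show "real N * (shannon d p - \<delta>) < real M" unfolding K_def by (simp add: algebra_simps)
  qed
qed

lemma shannon_nonneg:
  assumes p: "prob_vec d p"
  shows "0 \<le> shannon d p"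
proof -
  have "p i * log 2 (p i) \<le> 0" if i: "i < d" "p i \<noteq> 0" for i
  proof -
    have "0 < p i" using p i unfolding prob_vec_def by force
    moreover have "p i \<le> 1" using prob_vec_le_1[OF p i(1)] .
    ultimately show ?thesis by (simp add: mult_nonneg_nonpos)
  qed
  then show ?thesis unfolding shannon_def by (auto intro!: sum_nonpos)
qed

lemma min_bits_le: "scheme_ok d p N M eps E D \<Longrightarrow> min_bits d p N eps \<le> M"
  unfolding min_bits_def by (intro Least_le) blast

lemma scheme_ok_min_bits:
  "scheme_ok d p N M eps E D \<Longrightarrow> \<exists>E D. scheme_ok d p N (min_bits d p N eps) eps E D"
  unfolding min_bits_def by (rule LeastI_ex) blast

lemma min_bits_rate_tendsto:
  assumes p: "prob_vec d p" and eps: "0 < eps" "eps < 1"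
  shows "(\<lambda>N. real (min_bits d p N eps) / real N) \<longlonglongrightarrow> shannon d p"
  unfolding tendsto_iff
proof (intro allI impI)
  fix r :: real assume "0 < r"
  define \<delta> where "\<delta> = r / 2"
  define H where "H = shannon d p"
  have \<delta>: "0 < \<delta>" unfolding \<delta>_def using \<open>0 < r\<close> by simp
  have "eventually (\<lambda>N. (\<exists>E D. scheme_ok d p N (nat \<lceil>real N * (H + \<delta>)\<rceil>) eps E D) \<and>
      (\<forall>M E D. scheme_ok d p N M eps E D \<longrightarrow> real N * (H - \<delta>) < real M) \<and> 1 / \<delta> < real N) sequentially"
    using eventually_scheme_ok_at_bits_above_entropy[OF p eps(1) \<delta>] eventually_scheme_ok_imp_bits_above_entropy[OF p eps(2) \<delta>]
      eventually_gt_at_top[of "nat \<lceil>1 / \<delta>\<rceil>"]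
    unfolding H_def by eventually_elim (auto intro: le_less_trans[OF real_nat_ceiling_ge])
  then show "eventually (\<lambda>N. dist (real (min_bits d p N eps) / real N) (shannon d p) < r) sequentially"
  proof (rule eventually_mono, elim conjE exE)
    fix N E D
    assume ok: "scheme_ok d p N (nat \<lceil>real N * (H + \<delta>)\<rceil>) eps E D"
      and converse: "\<forall>M E D. scheme_ok d p N M eps E D \<longrightarrow> real N * (H - \<delta>) < real M"
      and large: "1 / \<delta> < real N"
    have N: "0 < real N" using large \<delta> by (smt (verit) divide_pos_pos)
    have "0 \<le> real N * (H + \<delta>)" using shannon_nonneg[OF p] \<delta> N unfolding H_def by simp
    then have "real (min_bits d p N eps) \<le> real N * (H + \<delta>) + 1"
      using min_bits_le[OF ok] by linarith
    moreover have "real N * (H - \<delta>) < real (min_bits d p N eps)"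
      using converse scheme_ok_min_bits[OF ok] by blast
    moreover have "1 < real N * \<delta>" using large \<delta> by (simp add: field_simps)
    ultimately have "\<bar>real (min_bits d p N eps) - real N * H\<bar> < real N * r"
      unfolding \<delta>_def by (simp add: abs_less_iff algebra_simps)
    then show "dist (real (min_bits d p N eps) / real N) (shannon d p) < r"
      using N unfolding H_def dist_real_def by (simp add: field_simps abs_divide)
  qed
qed

lemma info_rate_eq_shannon:
  assumes "prob_vec d p" "0 < eps" "eps < 1"
  shows "info_rate d p eps = ereal (shannon d p)"
  unfolding info_rate_def
  using min_bits_rate_tendsto[OF assms] by (intro lim_imp_Limsup tendsto_ereal) auto

theorem mainTheorem15:
  fixes d :: nat and p :: "nat \<Rightarrow> real"
  assumes "prob_vec d p"
  shows "((\<lambda>eps. info_rate d p eps) \<longlongrightarrow> ereal (shannon d p)) (at_right 0)"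
proof (rule tendsto_eventually)
  have "eventually (\<lambda>eps. eps \<in> {0<..<1::real}) (at_right 0)"
    by (rule eventually_at_right_real) simp
  then show "eventually (\<lambda>eps. info_rate d p eps = ereal (shannon d p)) (at_right 0)"
    by (rule eventually_mono) (auto intro: info_rate_eq_shannon[OF assms])
qed

end
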